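(* Suppose a subshift $X_0^+\subset\mathcal A^\mathbb N$ has a word complexity function that grows at most polynomially and is the smallest subshift which supports all its invariant measures. Then the potential $\phi$ defined by $\phi(x)=0$ if $x\in X_0^+$ and $\phi(x)=-a_j$ if $\mathrm{dist}(x,X_0^+)=2^{-j}$ freezes on $X_0^+$ provided $(a_j)$ is a decreasing sequence satisfying $a_j\ge\frac{\log^2 j}{j}$, $j\in\mathbb N$. *)

theory Defs
  imports "HOL-Probability.Probability"
begin

definition shift :: "(nat \<Rightarrow> 'a) \<Rightarrow> (nat \<Rightarrow> 'a)" where
  "shift x = (\<lambda>n. x (Suc n))"

definition sdist :: "(nat \<Rightarrow> 'a) \<Rightarrow> (nat \<Rightarrow> 'a) \<Rightarrow> real" where
  "sdist x y = (if x = y then 0 else (1/2) ^ (LEAST i. x i \<noteq> y i))"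

definition shift_setdist :: "(nat \<Rightarrow> 'a) \<Rightarrow> (nat \<Rightarrow> 'a) set \<Rightarrow> real" where
  "shift_setdist x X = Inf (sdist x ` X)"

text \<open>Closedness in the product (cylinder) topology.\<close>
definition shift_closed :: "(nat \<Rightarrow> 'a) set \<Rightarrow> bool" where
  "shift_closed X \<longleftrightarrow> (\<forall>x. (\<forall>n. \<exists>y\<in>X. \<forall>i<n. x i = y i) \<longrightarrow> x \<in> X)"

definition subshift :: "(nat \<Rightarrow> 'a) set \<Rightarrow> bool" where
  "subshift X \<longleftrightarrow> X \<noteq> {} \<and> shift_closed X \<and> shift ` X \<subseteq> X"

definition language :: "(nat \<Rightarrow> 'a) set \<Rightarrow> nat \<Rightarrow> 'a list set" where
  "language X n = {map x [0..<n] | x. x \<in> X}"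

definition complexity :: "(nat \<Rightarrow> 'a) set \<Rightarrow> nat \<Rightarrow> nat" where
  "complexity X n = card (language X n)"

definition polynomial_complexity :: "(nat \<Rightarrow> 'a) set \<Rightarrow> bool" where
  "polynomial_complexity X \<longleftrightarrow>
     (\<exists>C::real. \<exists>d::nat. \<forall>n\<ge>1. real (complexity X n) \<le> C * real n ^ d)"

text \<open>Measurable structure of the full shift (product of discrete spaces = Borel).\<close>
definition shift_space :: "(nat \<Rightarrow> 'a) measure" where
  "shift_space = PiM UNIV (\<lambda>_. count_space UNIV)"

definition cyl :: "'a list \<Rightarrow> (nat \<Rightarrow> 'a) set" where
  "cyl w = {x. \<forall>i<length w. x i = w ! i}"

definition inv_measure :: "(nat \<Rightarrow> 'a) measure \<Rightarrow> bool" where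
  "inv_measure \<mu> \<longleftrightarrow> sets \<mu> = sets shift_space \<and> prob_space \<mu> \<and>
     (\<forall>A\<in>sets shift_space. emeasure \<mu> (shift -` A) = emeasure \<mu> A)"

definition inv_measure_on :: "(nat \<Rightarrow> 'a) set \<Rightarrow> (nat \<Rightarrow> 'a) measure \<Rightarrow> bool" where
  "inv_measure_on X \<mu> \<longleftrightarrow> inv_measure \<mu> \<and> emeasure \<mu> X = 1"

definition minimal_support :: "(nat \<Rightarrow> 'a) set \<Rightarrow> bool" where
  "minimal_support X \<longleftrightarrow>
     (\<forall>Y. subshift Y \<and> (\<forall>\<mu>. inv_measure_on X \<mu> \<longrightarrow> emeasure \<mu> Y = 1) \<longrightarrow> X \<subseteq> Y)"

text \<open>Kolmogorov-Sinai entropy of an invariant measure on the full shift, computed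
  with respect to the generating partition into 1-cylinders.\<close>
definition block_entropy :: "(nat \<Rightarrow> 'a::finite) measure \<Rightarrow> nat \<Rightarrow> real" where
  "block_entropy \<mu> n =
     (\<Sum>w\<in>{w::'a list. length w = n}. - measure \<mu> (cyl w) * ln (measure \<mu> (cyl w)))"

definition ks_entropy :: "(nat \<Rightarrow> 'a::finite) measure \<Rightarrow> real" where
  "ks_entropy \<mu> = lim (\<lambda>n. block_entropy \<mu> n / real n)"

text \<open>Pressure (variational definition) and equilibrium states on the full shift.\<close>
definition pressure :: "((nat \<Rightarrow> 'a::finite) \<Rightarrow> real) \<Rightarrow> real" where
  "pressure \<psi> = Sup {ks_entropy \<nu> + integral\<^sup>L \<nu> \<psi> | \<nu>. inv_measure \<nu>}"

definition equilibrium_state :: "((nat \<Rightarrow> 'a::finite) \<Rightarrow> real) \<Rightarrow> (nat \<Rightarrow> 'a) measure \<Rightarrow> bool" where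
  "equilibrium_state \<psi> \<mu> \<longleftrightarrow> inv_measure \<mu> \<and> ks_entropy \<mu> + integral\<^sup>L \<mu> \<psi> = pressure \<psi>"

text \<open>Topological entropy of X via the variational principle, and measures of maximal entropy.\<close>
definition top_entropy :: "(nat \<Rightarrow> 'a::finite) set \<Rightarrow> real" where
  "top_entropy X = Sup {ks_entropy \<nu> | \<nu>. inv_measure_on X \<nu>}"

definition max_entropy_measure_on :: "(nat \<Rightarrow> 'a::finite) set \<Rightarrow> (nat \<Rightarrow> 'a) measure \<Rightarrow> bool" where
  "max_entropy_measure_on X \<mu> \<longleftrightarrow> inv_measure_on X \<mu> \<and> ks_entropy \<mu> = top_entropy X"

definition freezes_on :: "((nat \<Rightarrow> 'a::finite) \<Rightarrow> real) \<Rightarrow> (nat \<Rightarrow> 'a) set \<Rightarrow> bool" where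
  "freezes_on \<phi> X \<longleftrightarrow>
     (\<exists>\<beta>0::real. \<forall>\<beta>>\<beta>0.
        pressure (\<lambda>x. \<beta> * \<phi> x) = top_entropy X \<and>
        (\<forall>\<mu>. equilibrium_state (\<lambda>x. \<beta> * \<phi> x) \<mu> \<longleftrightarrow> max_entropy_measure_on X \<mu>))"

end

theory Submission
  imports Defs "HOL-Real_Asymp.Real_Asymp"
begin

(* For an invariant measure nu let I(nu) be the integral of -phi. The penalty of a word v is a
   lower bound for -phi on the cylinder of v, and the cost c(w) of a word w sums the penalties of
   its suffixes, so that the expected cost of n-words is at most n I(nu). Gibbs' inequality with
   weights exp (-beta0 c(w)) gives H_n(nu) <= beta0 n I(nu) + ln Z_n. Cutting words at their
   longest admissible suffix, polynomial complexity and a_j >= ln^2 j / j show by induction that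
   Z_n <= exp (O (ln^2 n)); hence h(nu) <= beta0 I(nu). So for beta > beta0 the free energy
   h(nu) - beta I(nu) is <= 0, with equality iff I(nu) = 0, i.e. iff nu(X) = 1, and measures on X
   have zero entropy by polynomial complexity. Thus the pressure of beta phi is 0 = h_top(X) and
   its equilibrium states are exactly the invariant measures on X. *)

section \<open>Sums over words and elementary inequalities\<close>

lemma finite_length_lists: "finite {xs::'a::finite list. length xs = n}"
  using finite_lists_length_eq[of "UNIV::'a set" n] by simp

lemma sum_lists_length_Suc:
  "(\<Sum>u\<in>{u::'a::finite list. length u = Suc m}. f u) = (\<Sum>c\<in>UNIV. \<Sum>u\<in>{u. length u = m}. f (c # u))"
proof -
  let ?h = "\<lambda>(c, u). c # u :: 'a list"
  have img: "{u::'a list. length u = Suc m} = ?h ` (UNIV \<times> {u. length u = m})"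
    by (auto simp: length_Suc_conv image_iff)
  have "inj_on ?h (UNIV \<times> {u. length u = m})"
    by (auto intro: inj_onI)
  then have "(\<Sum>u\<in>{u::'a list. length u = Suc m}. f u) = (\<Sum>(c, u)\<in>UNIV \<times> {u. length u = m}. f (c # u))"
    unfolding img by (subst sum.reindex) (auto simp: case_prod_beta)
  also have "\<dots> = (\<Sum>c\<in>UNIV. \<Sum>u\<in>{u. length u = m}. f (c # u))"
    by (rule sum.cartesian_product[symmetric])
  finally show ?thesis .
qed

lemma sum_lists_length_add:
  "(\<Sum>w\<in>{w::'a::finite list. length w = m + n}. f w)
     = (\<Sum>u\<in>{u. length u = m}. \<Sum>v\<in>{v. length v = n}. f (u @ v))"
proof -
  let ?h = "\<lambda>(u, v). u @ v :: 'a list"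
  let ?UV = "{u::'a list. length u = m} \<times> {v. length v = n}"
  have img: "{w::'a list. length w = m + n} = ?h ` ?UV"
  proof (intro equalityI subsetI)
    fix w :: "'a list" assume "w \<in> {w. length w = m + n}"
    then show "w \<in> ?h ` ?UV"
      by (intro image_eqI[where x="(take m w, drop m w)"]) auto
  qed auto
  have "inj_on ?h ?UV"
  proof (rule inj_onI)
    fix p q :: "'a list \<times> 'a list"
    assume "p \<in> ?UV" "q \<in> ?UV" "?h p = ?h q"
    then show "p = q"
      by (cases p; cases q) simp
  qed
  then have "(\<Sum>w\<in>{w::'a list. length w = m + n}. f w) = (\<Sum>(u, v)\<in>?UV. f (u @ v))"
    unfolding img by (subst sum.reindex) (auto simp: case_prod_beta)
  also have "\<dots> = (\<Sum>u\<in>{u. length u = m}. \<Sum>v\<in>{v. length v = n}. f (u @ v))"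
    by (rule sum.cartesian_product[symmetric])
  finally show ?thesis .
qed

lemma sum_lists_split_bound:
  fixes f :: "'a::finite list \<Rightarrow> real" and s :: "'a list \<Rightarrow> nat"
    and g :: "nat \<Rightarrow> 'a list \<Rightarrow> real" and Y :: "nat \<Rightarrow> 'a list set"
  assumes "finite S" and Y: "\<And>l. finite (Y l)" and g: "\<And>l u. 0 \<le> g l u"
    and H: "\<And>x. length x = m \<Longrightarrow> s x \<in> S \<and> s x \<le> m \<and> drop (m - s x) x \<in> Y (s x)
                 \<and> f x \<le> g (s x) (take (m - s x) x)"
  shows "(\<Sum>x\<in>{x. length x = m}. f x) \<le> (\<Sum>l\<in>S. real (card (Y l)) * (\<Sum>u\<in>{u. length u = m - l}. g l u))"
proof -
  let ?A = "{x::'a list. length x = m}"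
  have "(\<Sum>x\<in>?A. f x) \<le> (\<Sum>x\<in>?A. g (s x) (take (m - s x) x))"
    by (rule sum_mono) (use H in auto)
  also have "\<dots> = (\<Sum>l\<in>S. \<Sum>x\<in>{x\<in>?A. s x = l}. g l (take (m - l) x))"
    by (subst sum.group[symmetric, where g=s]) (use finite_length_lists assms(1) H in \<open>auto intro!: sum.cong\<close>)
  also have "\<dots> \<le> (\<Sum>l\<in>S. real (card (Y l)) * (\<Sum>u\<in>{u. length u = m - l}. g l u))"
  proof (rule sum_mono)
    fix l assume "l \<in> S"
    let ?B = "{x\<in>?A. s x = l}"
    let ?U = "{u::'a list. length u = m - l}"
    let ?t = "\<lambda>x::'a list. (take (m - l) x, drop (m - l) x)"
    have inj: "inj_on ?t ?B"
      by (rule inj_onI) (metis append_take_drop_id prod.inject)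
    have sub: "?t ` ?B \<subseteq> ?U \<times> Y l"
      using H by auto
    have "(\<Sum>x\<in>?B. g l (take (m - l) x)) = (\<Sum>p\<in>?t ` ?B. g l (fst p))"
      by (subst sum.reindex[OF inj]) simp
    also have "\<dots> \<le> (\<Sum>p\<in>?U \<times> Y l. g l (fst p))"
      by (rule sum_mono2[OF finite_cartesian_product[OF finite_length_lists Y] sub]) (simp add: g)
    also have "\<dots> = (\<Sum>u\<in>?U. \<Sum>v\<in>Y l. g l u)"
      by (subst sum.cartesian_product) (simp add: case_prod_beta)
    also have "\<dots> = real (card (Y l)) * (\<Sum>u\<in>?U. g l u)"
      by (simp add: sum_distrib_left mult.commute)
    finally show "(\<Sum>x\<in>?B. g l (take (m - l) x)) \<le> real (card (Y l)) * (\<Sum>u\<in>?U. g l u)" .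
  qed
  finally show ?thesis .
qed

lemma sum_inverse_pronic: "(\<Sum>l=1..m. 1 / (real l * (real l + 1))) = 1 - 1 / (real m + 1)"
proof (induction m)
  case (Suc m)
  have "real m + 1 \<noteq> 0" "real m + 1 + 1 \<noteq> 0"
    by linarith+
  then have "1 / ((real m + 1) * (real m + 1 + 1)) = 1 / (real m + 1) - 1 / (real m + 1 + 1)"
    using diff_frac_eq[of "real m + 1" "real m + 1 + 1" 1 1] by simp
  then show ?case
    using Suc.IH by (simp add: add.commute)
qed simp

lemma LIMSEQ_ln_square_div:
  fixes c0 c1 c2 :: real
  shows "(\<lambda>n. (c0 + c1 * ln (real n + 1) + c2 * ln (real n + 1)^2) / real n) \<longlonglongrightarrow> 0"
proof -
  have "(\<lambda>n::nat. c0 * (1 / real n) + c1 * (ln (real n + 1) / real n) + c2 * (ln (real n + 1)^2 / real n))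
      \<longlonglongrightarrow> c0 * 0 + c1 * 0 + c2 * 0"
    by (intro tendsto_add tendsto_mult tendsto_const) real_asymp+
  then show ?thesis
    by (simp add: add_divide_distrib)
qed

lemma subadditive_le_mult:
  fixes h :: "nat \<Rightarrow> real"
  assumes sub: "\<And>m n. h (m + n) \<le> h m + h n"
  shows "h (q * N + r) \<le> real q * h N + h r"
proof (induction q)
  case (Suc q)
  have "h (Suc q * N + r) \<le> h N + h (q * N + r)"
    using sub[of N "q * N + r"] by (simp add: algebra_simps)
  with Suc show ?case by (simp add: algebra_simps)
qed simp

lemma fekete_convergent:
  fixes h :: "nat \<Rightarrow> real"
  assumes h0: "\<And>n. h n \<ge> 0" and sub: "\<And>m n. h (m + n) \<le> h m + h n"
  shows "convergent (\<lambda>n. h n / real n)"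
proof -
  define A where "A = (\<lambda>n. h n / real n) ` {1..}"
  define L where "L = Inf A"
  have bdd: "bdd_below A" unfolding A_def using h0 by (intro bdd_belowI[where m=0]) auto
  have Ane: "A \<noteq> {}" unfolding A_def by auto
  have low: "h n / real n \<ge> L" if "n \<ge> 1" for n
    unfolding L_def by (rule cInf_lower[OF _ bdd]) (use that in \<open>auto simp: A_def\<close>)
  have "(\<lambda>n. h n / real n) \<longlonglongrightarrow> L"
  proof (rule LIMSEQ_I)
    fix e :: real assume e: "e > 0"
    have "\<exists>x\<in>A. x < L + e / 2" unfolding L_def using Ane e
      by (subst cInf_less_iff[OF Ane bdd, symmetric]) simp
    then obtain N where N: "N \<ge> 1" "h N / real N < L + e / 2" unfolding A_def by auto
    define M where "M = (\<Sum>r<N. h r)"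
    have hM: "h r \<le> M" if "r < N" for r
      unfolding M_def using that h0 by (intro member_le_sum) auto
    obtain n0 :: nat where n0: "real n0 > 2 * M / e" using reals_Archimedean2 by blast
    show "\<exists>no. \<forall>n\<ge>no. norm (h n / real n - L) < e"
    proof (intro exI allI impI)
      fix n assume "n \<ge> max 1 n0"
      then have n: "real n > 0" "real n > 2 * M / e" using n0 by auto
      define q where "q = n div N"
      have qN: "real q * real N \<le> real n"
        unfolding q_def by (metis div_times_less_eq_dividend of_nat_le_iff of_nat_mult)
      have "h n \<le> real q * h N + M"
        using subadditive_le_mult[OF sub, of q N "n mod N"] hM[of "n mod N"] N(1) by (simp add: q_def)
      then have "h n / real n \<le> (real q * real N / real n) * (h N / real N) + M / real n"
        using n N(1) by (simp add: field_simps)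
      also have "\<dots> \<le> h N / real N + M / real n"
        using qN n h0[of N] by (intro add_right_mono mult_left_le_one_le) auto
      finally have "h n / real n \<le> h N / real N + M / real n" .
      moreover have "M / real n < e / 2"
        using n e by (simp add: field_simps)
      ultimately have "h n / real n < L + e"
        using N(2) by linarith
      then show "norm (h n / real n - L) < e"
        using low[of n] n by simp
    qed
  qed
  then show ?thesis unfolding convergent_def by blast
qed

lemma entropy_joint_le_marginals:
  fixes p :: "'u \<Rightarrow> 'v \<Rightarrow> real"
  assumes U: "finite U" and V: "finite V" and p0: "\<And>u v. u \<in> U \<Longrightarrow> v \<in> V \<Longrightarrow> p u v \<ge> 0"
    and tot: "(\<Sum>u\<in>U. \<Sum>v\<in>V. p u v) = 1"
  shows "(\<Sum>u\<in>U. \<Sum>v\<in>V. - p u v * ln (p u v))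
     \<le> (\<Sum>u\<in>U. - (\<Sum>v\<in>V. p u v) * ln (\<Sum>v\<in>V. p u v)) + (\<Sum>v\<in>V. - (\<Sum>u\<in>U. p u v) * ln (\<Sum>u\<in>U. p u v))"
proof -
  define P where "P u = (\<Sum>v\<in>V. p u v)" for u
  define Q where "Q v = (\<Sum>u\<in>U. p u v)" for v
  have Pge: "p u v \<le> P u" and Qge: "p u v \<le> Q v" if "u \<in> U" "v \<in> V" for u v
    unfolding P_def Q_def using that U V p0 by (auto intro!: member_le_sum)
  have P0: "P u \<ge> 0" if "u \<in> U" for u unfolding P_def using that p0 by (intro sum_nonneg) auto
  have Q0: "Q v \<ge> 0" if "v \<in> V" for v unfolding Q_def using that p0 by (intro sum_nonneg) auto
  \<comment> \<open>pointwise, by \<open>ln t \<le> t - 1\<close> at \<open>t = P u * Q v / p u v\<close>\<close>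
  have pointwise: "- p u v * ln (p u v) + p u v * ln (P u) + p u v * ln (Q v) \<le> P u * Q v - p u v"
    if uv: "u \<in> U" "v \<in> V" for u v
  proof (cases "p u v = 0")
    case False
    then have pp: "p u v > 0" using p0[OF uv] by simp
    then have Pp: "P u > 0" and Qp: "Q v > 0" using Pge[OF uv] Qge[OF uv] by linarith+
    have "ln (P u) + ln (Q v) - ln (p u v) \<le> P u * Q v / p u v - 1"
      using ln_le_minus_one[of "P u * Q v / p u v"] Pp Qp pp by (simp add: ln_div ln_mult_pos)
    then have "p u v * (ln (P u) + ln (Q v) - ln (p u v)) \<le> p u v * (P u * Q v / p u v - 1)"
      using pp by (intro mult_left_mono) auto
    also have "\<dots> = P u * Q v - p u v"
      using pp by (simp add: field_simps)
    finally show ?thesis by (simp add: algebra_simps)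
  qed (use P0[OF uv(1)] Q0[OF uv(2)] in simp)
  have PlnP: "(\<Sum>u\<in>U. \<Sum>v\<in>V. p u v * ln (P u)) = (\<Sum>u\<in>U. P u * ln (P u))"
    unfolding P_def by (simp add: sum_distrib_right)
  have QlnQ: "(\<Sum>u\<in>U. \<Sum>v\<in>V. p u v * ln (Q v)) = (\<Sum>v\<in>V. Q v * ln (Q v))"
    unfolding Q_def by (subst sum.swap) (simp add: sum_distrib_right)
  have "(\<Sum>u\<in>U. \<Sum>v\<in>V. - p u v * ln (p u v) + p u v * ln (P u) + p u v * ln (Q v))
      \<le> (\<Sum>u\<in>U. \<Sum>v\<in>V. P u * Q v - p u v)"
    by (intro sum_mono pointwise)
  also have "\<dots> = (\<Sum>u\<in>U. P u) * (\<Sum>v\<in>V. Q v) - 1"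
    using tot by (simp add: sum_subtractf sum_product)
  also have "\<dots> = 0"
    using tot unfolding P_def Q_def by (subst (2) sum.swap) simp
  finally have "(\<Sum>u\<in>U. \<Sum>v\<in>V. - p u v * ln (p u v) + p u v * ln (P u) + p u v * ln (Q v)) \<le> 0" .
  then show ?thesis
    unfolding P_def[symmetric] Q_def[symmetric] sum.distrib PlnP QlnQ by (simp add: sum_negf)
qed

lemma gibbs_ineq:
  fixes p c :: "'w \<Rightarrow> real" and b :: real
  assumes S: "finite S" and p0: "\<And>w. w \<in> S \<Longrightarrow> p w \<ge> 0" and tot: "(\<Sum>w\<in>S. p w) = 1"
  shows "(\<Sum>w\<in>S. - p w * ln (p w)) \<le> b * (\<Sum>w\<in>S. p w * c w) + ln (\<Sum>w\<in>S. exp (- b * c w))"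
proof -
  define Z where "Z = (\<Sum>w\<in>S. exp (- b * c w))"
  have "S \<noteq> {}" using tot by auto
  then have Zp: "Z > 0" unfolding Z_def using S by (intro sum_pos) auto
  have pointwise: "- p w * ln (p w) - b * (p w * c w) - p w * ln Z \<le> exp (- b * c w) / Z - p w"
    if w: "w \<in> S" for w
  proof (cases "p w = 0")
    case False
    then have pp: "p w > 0" using p0[OF w] by simp
    define t where "t = exp (- b * c w) / Z"
    have tp: "t > 0" unfolding t_def using Zp by simp
    have "ln (t / p w) = - b * c w - ln Z - ln (p w)"
      using pp Zp unfolding t_def by (simp add: ln_div del: divide_divide_eq_left)
    then have "- b * c w - ln Z - ln (p w) \<le> t / p w - 1"
      using ln_le_minus_one[of "t / p w"] tp pp by simp
    then have "p w * (- b * c w - ln Z - ln (p w)) \<le> p w * (t / p w - 1)"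
      using pp by (intro mult_left_mono) auto
    also have "\<dots> = t - p w"
      using pp by (simp add: field_simps)
    finally show ?thesis unfolding t_def by (simp add: algebra_simps)
  qed (use Zp in simp)
  have "(\<Sum>w\<in>S. - p w * ln (p w) - b * (p w * c w) - p w * ln Z) \<le> (\<Sum>w\<in>S. exp (- b * c w) / Z - p w)"
    by (intro sum_mono pointwise)
  also have "\<dots> = 0" using Zp tot by (simp add: sum_subtractf sum_divide_distrib[symmetric] Z_def)
  finally have "(\<Sum>w\<in>S. - p w * ln (p w)) - b * (\<Sum>w\<in>S. p w * c w) - (\<Sum>w\<in>S. p w) * ln Z \<le> 0"
    by (simp add: sum_subtractf sum_distrib_left sum_distrib_right)
  then show ?thesis
    using tot unfolding Z_def by simp
qed

section \<open>Admissible words and penalties\<close>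

definition admissible :: "(nat \<Rightarrow> 'a) set \<Rightarrow> 'a list \<Rightarrow> bool" where
  "admissible X w \<longleftrightarrow> (\<exists>x\<in>X. \<forall>i<length w. x i = w ! i)"

lemma language_eq_admissible: "language X n = {w. length w = n \<and> admissible X w}"
proof (intro equalityI subsetI)
  fix w assume "w \<in> {w. length w = n \<and> admissible X w}"
  then obtain x where "x \<in> X" "\<forall>i<n. x i = w ! i" "length w = n"
    unfolding admissible_def by auto
  then show "w \<in> language X n"
    unfolding language_def by (auto intro!: exI[of _ x] nth_equalityI)
qed (auto simp: language_def admissible_def)

lemma admissible_take: "admissible X w \<Longrightarrow> admissible X (take j w)"
  unfolding admissible_def by auto

lemma admissible_append_left: "admissible X (u @ v) \<Longrightarrow> admissible X u"
  using admissible_take[of X "u @ v" "length u"] by simp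

lemma admissible_Nil: "X \<noteq> {} \<Longrightarrow> admissible X []"
  unfolding admissible_def by auto

definition adm_prefix_len :: "(nat \<Rightarrow> 'a) set \<Rightarrow> 'a list \<Rightarrow> nat" where
  "adm_prefix_len X v = (GREATEST j. j \<le> length v \<and> admissible X (take j v))"

lemma
  assumes "X \<noteq> {}"
  shows adm_prefix_len_le: "adm_prefix_len X v \<le> length v"
    and admissible_take_adm_prefix_len: "admissible X (take (adm_prefix_len X v) v)"
proof -
  have "adm_prefix_len X v \<le> length v \<and> admissible X (take (adm_prefix_len X v) v)"
    unfolding adm_prefix_len_def
    by (rule GreatestI_nat[where k=0 and b="length v"]) (simp_all add: admissible_Nil[OF assms])
  then show "adm_prefix_len X v \<le> length v" "admissible X (take (adm_prefix_len X v) v)"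
    by auto
qed

lemma le_adm_prefix_len:
  "j \<le> length v \<Longrightarrow> admissible X (take j v) \<Longrightarrow> j \<le> adm_prefix_len X v"
  unfolding adm_prefix_len_def by (rule Greatest_le_nat[where b="length v"]) auto

lemma adm_prefix_len_append:
  assumes "X \<noteq> {}" "\<not> admissible X u"
  shows "adm_prefix_len X (u @ v) \<le> adm_prefix_len X u"
proof -
  let ?j = "adm_prefix_len X (u @ v)"
  have adm: "admissible X (take ?j (u @ v))"
    by (rule admissible_take_adm_prefix_len[OF assms(1)])
  have "?j \<le> length u"
  proof (rule ccontr)
    assume "\<not> ?j \<le> length u"
    then have "take ?j (u @ v) = u @ take (?j - length u) v" by simp
    then show False using adm assms(2) admissible_append_left by metis
  qed
  with adm show ?thesis
    by (intro le_adm_prefix_len) simp_all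
qed

definition adm_suffix_len :: "(nat \<Rightarrow> 'a) set \<Rightarrow> 'a list \<Rightarrow> nat" where
  "adm_suffix_len X x = (GREATEST s. s \<le> length x \<and> admissible X (drop (length x - s) x))"

lemma
  assumes "X \<noteq> {}"
  shows adm_suffix_len_le: "adm_suffix_len X x \<le> length x"
    and admissible_drop_adm_suffix_len: "admissible X (drop (length x - adm_suffix_len X x) x)"
proof -
  have "adm_suffix_len X x \<le> length x \<and> admissible X (drop (length x - adm_suffix_len X x) x)"
    unfolding adm_suffix_len_def
    by (rule GreatestI_nat[where k=0 and b="length x"]) (simp_all add: admissible_Nil[OF assms])
  then show "adm_suffix_len X x \<le> length x" "admissible X (drop (length x - adm_suffix_len X x) x)"
    by auto
qed

lemma not_admissible_drop_before_adm_suffix: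
  assumes "k < length x - adm_suffix_len X x"
  shows "\<not> admissible X (drop k x)"
proof
  assume "admissible X (drop k x)"
  then have "length x - k \<le> adm_suffix_len X x"
    using assms unfolding adm_suffix_len_def
    by (intro Greatest_le_nat[where b="length x"]) simp_all
  with assms show False by linarith
qed

text \<open>\<open>penalty X a v\<close> is the discrete analogue of \<open>- \<phi>\<close> on the cylinder of \<open>v\<close>, and \<open>word_cost\<close>
  the analogue of the Birkhoff sum \<open>- \<Sum>k<n. \<phi> (shift^k x)\<close>.\<close>
definition penalty :: "(nat \<Rightarrow> 'a) set \<Rightarrow> (nat \<Rightarrow> real) \<Rightarrow> 'a list \<Rightarrow> real" where
  "penalty X a v = (if admissible X v then 0 else a (adm_prefix_len X v))"

definition word_cost :: "(nat \<Rightarrow> 'a) set \<Rightarrow> (nat \<Rightarrow> real) \<Rightarrow> 'a list \<Rightarrow> real" where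
  "word_cost X a w = (\<Sum>k<length w. penalty X a (drop k w))"

text \<open>\<open>tail_penalty X a q v\<close> bounds \<open>penalty X a (v @ y)\<close> from below for every \<open>y\<close> of length \<open>q\<close>
  with \<open>v @ y\<close> not admissible; \<open>tail_cost\<close> sums these bounds over the suffixes of a word.\<close>
definition tail_penalty :: "(nat \<Rightarrow> 'a) set \<Rightarrow> (nat \<Rightarrow> real) \<Rightarrow> nat \<Rightarrow> 'a list \<Rightarrow> real" where
  "tail_penalty X a q v = (if admissible X v then a (length v + q) else a (adm_prefix_len X v))"

definition tail_cost :: "(nat \<Rightarrow> 'a) set \<Rightarrow> (nat \<Rightarrow> real) \<Rightarrow> 'a list \<Rightarrow> nat \<Rightarrow> real" where
  "tail_cost X a u q = (\<Sum>k<length u. tail_penalty X a q (drop k u))"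

lemma tail_penalty_not_admissible: "\<not> admissible X v \<Longrightarrow> tail_penalty X a q v = penalty X a v"
  unfolding tail_penalty_def penalty_def by simp

lemma tail_penalty_le_penalty_append:
  assumes "X \<noteq> {}" "antimono a" "\<not> admissible X (v @ y)"
  shows "tail_penalty X a (length y) v \<le> penalty X a (v @ y)"
proof (cases "admissible X v")
  case True
  have "adm_prefix_len X (v @ y) \<le> length v + length y"
    using adm_prefix_len_le[OF assms(1), of "v @ y"] by simp
  with True assms(2,3) show ?thesis
    unfolding tail_penalty_def penalty_def by (simp add: antimonoD)
next
  case False
  with assms show ?thesis
    unfolding tail_penalty_def penalty_def by (simp add: antimonoD adm_prefix_len_append)
qed

lemma tail_penalty_ge:
  assumes "X \<noteq> {}" "antimono a" "length v \<le> n"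
  shows "a (n + q) \<le> tail_penalty X a q v"
  using assms adm_prefix_len_le[OF assms(1), of v]
  unfolding tail_penalty_def by (auto intro: antimonoD)

lemma tail_cost_le_penalties:
  assumes "X \<noteq> {}" "antimono a"
    and bad: "\<And>k. k < length u \<Longrightarrow> \<not> admissible X (drop k (u @ y))"
  shows "tail_cost X a u (length y) \<le> (\<Sum>k<length u. penalty X a (drop k (u @ y)))"
  unfolding tail_cost_def
proof (rule sum_mono)
  fix k assume "k \<in> {..<length u}"
  then show "tail_penalty X a (length y) (drop k u) \<le> penalty X a (drop k (u @ y))"
    using tail_penalty_le_penalty_append[OF assms(1,2)] bad[of k] by simp
qed

lemma sum_lessThan_length_append:
  "(\<Sum>k<length (u @ y). f k) = (\<Sum>k<length u. f k) + (\<Sum>k\<in>{length u..<length (u @ y)}. f k)"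
  by (simp add: lessThan_atLeast0 sum.atLeastLessThan_concat)

lemma tail_cost_append_ge:
  assumes "X \<noteq> {}" "antimono a"
    and bad: "\<And>k. k < length u \<Longrightarrow> \<not> admissible X (drop k (u @ y))"
  shows "tail_cost X a u (length y) + real (length y) * a (q + length y) \<le> tail_cost X a (u @ y) q"
proof -
  have "tail_cost X a u (length y) \<le> (\<Sum>k<length u. tail_penalty X a q (drop k (u @ y)))"
    using tail_cost_le_penalties[OF assms] bad by (simp add: tail_penalty_not_admissible)
  moreover have "real (length y) * a (q + length y) = (\<Sum>k\<in>{length u..<length (u @ y)}. a (length y + q))"
    by (simp add: add.commute)
  moreover have "\<dots> \<le> (\<Sum>k\<in>{length u..<length (u @ y)}. tail_penalty X a q (drop k (u @ y)))"
    by (intro sum_mono tail_penalty_ge[OF assms(1,2)]) auto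
  ultimately show ?thesis
    unfolding tail_cost_def[of X a "u @ y"] sum_lessThan_length_append by linarith
qed

lemma tail_cost_le_word_cost_append:
  assumes "X \<noteq> {}" "antimono a" "\<And>j. a j \<ge> 0"
    and bad: "\<And>k. k < length u \<Longrightarrow> \<not> admissible X (drop k (u @ y))"
  shows "tail_cost X a u (length y) \<le> word_cost X a (u @ y)"
proof -
  have "(\<Sum>k\<in>{length u..<length (u @ y)}. penalty X a (drop k (u @ y))) \<ge> 0"
    using assms(3) by (intro sum_nonneg) (simp add: penalty_def)
  then show ?thesis
    using tail_cost_le_penalties[OF assms(1,2) bad]
    unfolding word_cost_def sum_lessThan_length_append by linarith
qed

section \<open>Subexponential growth of the partition function\<close>

lemma finite_language: "finite (language (X :: (nat \<Rightarrow> 'a::finite) set) n)"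
  by (rule finite_subset[OF _ finite_length_lists[of n]]) (auto simp: language_def)

locale freezing_setup =
  fixes X :: "(nat \<Rightarrow> 'a::finite) set" and a :: "nat \<Rightarrow> real" and C :: real and d :: nat
  assumes X_ne: "X \<noteq> {}"
    and a_Suc_le: "\<And>j. a (Suc j) \<le> a j"
    and a_ge: "\<And>j. j \<ge> 1 \<Longrightarrow> a j \<ge> ln (real j)^2 / real j"
    and complexity_le: "\<And>n. n \<ge> 1 \<Longrightarrow> real (complexity X n) \<le> C * real n ^ d"
begin

lemma antimono_a: "antimono a"
  using a_Suc_le by (simp add: antimono_iff_le_Suc)

lemma a_pos: "a j > 0"
proof -
  have "0 < ln (real (j + 2))^2 / real (j + 2)"
    using ln_gt_zero[of "real (j + 2)"] by simp
  also have "\<dots> \<le> a (j + 2)" by (rule a_ge) simp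
  also have "\<dots> \<le> a j" by (rule antimonoD[OF antimono_a]) simp
  finally show ?thesis .
qed

lemma a_nonneg: "a j \<ge> 0"
  using a_pos[of j] by simp

lemma a_ge_ln_square:
  assumes "m \<ge> 1"
  shows "a m \<ge> ln (real m + 1)^2 / (4 * (real m + 1))"
proof (cases "m = 1")
  case True
  have "ln (2::real)^2 / (4 * 2) \<le> ln 2 ^ 2 / 2"
    by (simp add: divide_left_mono)
  also have "\<dots> \<le> a 2"
    using a_ge[of 2] by simp
  also have "\<dots> \<le> a 1"
    by (rule antimonoD[OF antimono_a]) simp
  finally show ?thesis
    using True by simp
next
  case False
  then have m2: "m \<ge> 2" using assms by simp
  have "real m * real m \<ge> 2 * real m"
    using m2 by (intro mult_right_mono) auto
  then have "real m + 1 \<le> real m * real m"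
    using m2 by linarith
  then have "ln (real m + 1) \<le> 2 * ln (real m)"
    using m2 ln_le_cancel_iff[of "real m + 1" "real m * real m"] by (simp add: ln_mult)
  then have "ln (real m + 1)^2 \<le> 4 * ln (real m)^2"
    using power_mono[of "ln (real m + 1)" "2 * ln (real m)" 2] by (simp add: power_mult_distrib)
  then have "ln (real m + 1)^2 / (4 * (real m + 1)) \<le> 4 * ln (real m)^2 / (4 * (real m + 1))"
    by (intro divide_right_mono) auto
  also have "\<dots> = ln (real m)^2 / (real m + 1)"
    by (rule mult_divide_mult_cancel_left) simp
  also have "\<dots> \<le> ln (real m)^2 / real m"
    using m2 by (intro divide_left_mono) auto
  also have "\<dots> \<le> a m"
    by (rule a_ge[OF assms])
  finally show ?thesis .
qed

lemma C_nonneg: "C \<ge> 0"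
proof -
  obtain x where "x \<in> X" using X_ne by blast
  then have "language X 1 \<noteq> {}" unfolding language_def by blast
  then have "1 \<le> real (complexity X 1)"
    unfolding complexity_def using finite_language by (simp add: Suc_le_eq card_gt_0_iff)
  also have "\<dots> \<le> C" using complexity_le[of 1] by simp
  finally show ?thesis by simp
qed

text \<open>The summand \<open>CARD('a)\<close> accounts for the unrestricted one-letter tails in
  \<open>tail_partition_le\<close>.\<close>
definition "Cc = C + real CARD('a)"
definition "\<gamma> = (ln Cc / ln 2 + real d + 2) / ln 2"
definition "\<beta>\<^sub>0 = 64 * \<gamma>"

text \<open>\<open>exp (V q)\<close> bounds the tail partition functions (lemma \<open>tail_partition_le\<close>); being
  \<open>exp (O (ln\<^sup>2 q))\<close>, it is subexponential, which is what makes the pressure vanish.\<close>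
definition "V q = \<gamma> * ln (real q + 1)^2"

lemma Cc_ge_1: "Cc \<ge> 1"
proof -
  have "real CARD('a) \<ge> 1"
    by (simp add: Suc_le_eq)
  then show ?thesis
    using C_nonneg unfolding Cc_def by linarith
qed

lemma gamma_nonneg: "\<gamma> \<ge> 0"
  using Cc_ge_1 by (simp add: \<gamma>_def)

lemma beta0_nonneg: "\<beta>\<^sub>0 \<ge> 0"
  using gamma_nonneg by (simp add: \<beta>\<^sub>0_def)

lemma V_nonneg: "V q \<ge> 0"
  using gamma_nonneg by (simp add: V_def)

lemma V_mono: "l \<le> n \<Longrightarrow> V l \<le> V n"
  unfolding V_def using gamma_nonneg by (intro mult_left_mono power_mono) auto

lemma complexity_le_Cc: "real (complexity X l) \<le> Cc * (real l + 1)^d"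
proof (cases "l = 0")
  case True
  then have "language X l = {[]}"
    using X_ne by (auto simp: language_def)
  then show ?thesis
    using Cc_ge_1 True by (simp add: complexity_def)
next
  case False
  then have "real (complexity X l) \<le> C * real l ^ d"
    by (intro complexity_le) simp
  also have "\<dots> \<le> Cc * (real l + 1) ^ d"
    using C_nonneg by (intro mult_mono power_mono) (auto simp: Cc_def)
  finally show ?thesis .
qed

lemma card_tail_words_le:
  assumes "l \<ge> 1"
  shows "real (card {y::'a list. length y = l \<and> (admissible X y \<or> l = 1)}) \<le> Cc * (real l + 1)^d"
proof (cases "l = 1")
  case True
  then have "card {y::'a list. length y = l \<and> (admissible X y \<or> l = 1)} = CARD('a)"
    using card_lists_length_eq[of "UNIV::'a set" 1] by simp
  moreover have "real CARD('a) \<le> Cc" unfolding Cc_def using C_nonneg by simp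
  moreover have "Cc \<le> Cc * (real l + 1)^d" using Cc_ge_1 by simp
  ultimately show ?thesis by simp
next
  case False
  then show ?thesis
    using complexity_le_Cc[of l] by (simp add: complexity_def language_eq_admissible)
qed

lemma ln_Cc_poly_le:
  assumes "l \<ge> 1"
  shows "ln Cc + real d * ln (real l + 1) + ln (real l) + ln (real l + 1) \<le> \<gamma> * ln 2 * ln (real l + 1)"
proof -
  have u: "ln 2 \<le> ln (real l + 1)"
    using assms by simp
  have "ln Cc = (ln Cc / ln 2) * ln 2"
    by simp
  also have "\<dots> \<le> (ln Cc / ln 2) * ln (real l + 1)"
    using u Cc_ge_1 by (intro mult_left_mono) auto
  finally have "ln Cc \<le> (ln Cc / ln 2) * ln (real l + 1)" .
  moreover have "ln (real l) \<le> ln (real l + 1)"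
    using assms by simp
  moreover have "\<gamma> * ln 2 = ln Cc / ln 2 + real d + 2"
    unfolding \<gamma>_def by simp
  then have "\<gamma> * ln 2 * ln (real l + 1)
      = (ln Cc / ln 2) * ln (real l + 1) + real d * ln (real l + 1) + 2 * ln (real l + 1)"
    by (simp add: algebra_simps)
  ultimately show ?thesis
    by linarith
qed

lemma V_diff_ge:
  assumes "2 * (real l + 1) \<le> real q + 1"
  shows "\<gamma> * ln 2 * ln (real l + 1) \<le> V q - V l"
proof -
  define u where "u = ln (real l + 1)"
  define v where "v = ln (real q + 1)"
  have u: "0 \<le> u" unfolding u_def by simp
  have "ln 2 + u = ln (2 * (real l + 1))"
    unfolding u_def using ln_mult_pos[of 2 "real l + 1"] by simp
  also have "\<dots> \<le> v"
    unfolding v_def using assms by simp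
  finally have "ln 2 + u \<le> v" .
  then have "ln 2 * u \<le> (v - u) * (v + u)"
    using u ln_gt_zero[of 2] by (intro mult_mono) linarith+
  then have "\<gamma> * (ln 2 * u) \<le> \<gamma> * (v^2 - u^2)"
    using gamma_nonneg by (intro mult_left_mono) (simp_all add: power2_eq_square algebra_simps)
  then show ?thesis
    unfolding V_def u_def[symmetric] v_def[symmetric] by (simp add: algebra_simps)
qed

lemma beta0_a_ge:
  assumes "l \<ge> 1" "q \<le> 2 * l"
  shows "4 * \<gamma> * ln (real l + 1)^2 \<le> \<beta>\<^sub>0 * real l * a (q + l)"
proof -
  define w where "w = ln (real (q + l) + 1)"
  have "4 * \<gamma> * ln (real l + 1)^2 \<le> 4 * \<gamma> * w^2"
    unfolding w_def using gamma_nonneg by (intro mult_left_mono power_mono) auto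
  also have "\<dots> = \<beta>\<^sub>0 * real l * (w^2 / (16 * real l))"
    using assms(1) unfolding \<beta>\<^sub>0_def by simp
  also have "\<dots> \<le> \<beta>\<^sub>0 * real l * (w^2 / (4 * (real (q + l) + 1)))"
    using assms beta0_nonneg by (intro mult_left_mono divide_left_mono) auto
  also have "\<dots> \<le> \<beta>\<^sub>0 * real l * a (q + l)"
    unfolding w_def using a_ge_ln_square[of "q + l"] assms(1) beta0_nonneg by (intro mult_left_mono) auto
  finally show ?thesis .
qed

text \<open>Either \<open>q\<close> is large compared to \<open>l\<close> and the decrease from \<open>V q\<close> to \<open>V l\<close> pays for
  the left-hand side, or \<open>q \<le> 2 l\<close> and the lower bound on \<open>a (q + l)\<close> does.\<close>
lemma tail_step_exponent_le:
  assumes l: "l \<ge> 1"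
  shows "ln Cc + real d * ln (real l + 1) + ln (real l) + ln (real l + 1) + V l - V q
          \<le> \<beta>\<^sub>0 * real l * a (q + l)"
proof (cases "2 * (real l + 1) \<le> real q + 1")
  case True
  have "0 \<le> \<beta>\<^sub>0 * real l * a (q + l)"
    using beta0_nonneg a_nonneg[of "q + l"] by simp
  then show ?thesis
    using ln_Cc_poly_le[OF l] V_diff_ge[OF True] by linarith
next
  case False
  then have "real q < real (2 * l + 1)" by simp
  then have "q \<le> 2 * l" by linarith
  have "ln 2 * ln (real l + 1) \<le> ln (real l + 1) * ln (real l + 1)"
    using l by (intro mult_right_mono) auto
  then have "\<gamma> * ln 2 * ln (real l + 1) \<le> \<gamma> * ln (real l + 1)^2"
    using gamma_nonneg mult_left_mono by (fastforce simp: power2_eq_square)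
  moreover have "0 \<le> \<gamma> * ln (real l + 1)^2"
    using gamma_nonneg by simp
  ultimately show ?thesis
    using ln_Cc_poly_le[OF l] beta0_a_ge[OF l \<open>q \<le> 2 * l\<close>] V_nonneg[of q]
    unfolding V_def[of l] by linarith
qed

lemma tail_step_le:
  assumes "l \<ge> 1"
  shows "Cc * (real l + 1)^d * exp (- \<beta>\<^sub>0 * real l * a (q + l)) * exp (V l)
           \<le> exp (V q) * (1 / (real l * (real l + 1)))"
proof -
  define E where "E = ln Cc + real d * ln (real l + 1) + ln (real l) + ln (real l + 1)"
  have l: "real l > 0" using assms by simp
  have expE: "exp E = Cc * (real l + 1)^d * (real l * (real l + 1))"
    unfolding E_def using Cc_ge_1 l by (simp add: exp_add exp_of_nat_mult)
  have "exp E * exp (V l) \<le> exp (\<beta>\<^sub>0 * real l * a (q + l)) * exp (V q)"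
    using tail_step_exponent_le[OF assms, of q] unfolding E_def
    by (simp flip: exp_add)
  then have "Cc * (real l + 1)^d * exp (V l) * (real l * (real l + 1))
      \<le> exp (\<beta>\<^sub>0 * real l * a (q + l)) * exp (V q)"
    unfolding expE by (simp add: algebra_simps)
  then have "Cc * (real l + 1)^d * exp (V l) \<le> exp (\<beta>\<^sub>0 * real l * a (q + l)) * exp (V q) / (real l * (real l + 1))"
    using l by (simp add: le_divide_eq)
  then have "Cc * (real l + 1)^d * exp (V l) * exp (- \<beta>\<^sub>0 * real l * a (q + l))
      \<le> exp (\<beta>\<^sub>0 * real l * a (q + l)) * exp (V q) / (real l * (real l + 1)) * exp (- \<beta>\<^sub>0 * real l * a (q + l))"
    by (intro mult_right_mono) auto
  also have "\<dots> = exp (V q) * (1 / (real l * (real l + 1)))"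
    by (simp add: exp_minus field_simps)
  finally show ?thesis
    by (simp add: algebra_simps)
qed

lemma
  assumes "x \<noteq> []"
  defines "s \<equiv> max 1 (adm_suffix_len X x)"
  shows max_1_adm_suffix_len_le: "s \<le> length x"
    and admissible_drop_max_1_adm_suffix_len: "admissible X (drop (length x - s) x) \<or> s = 1"
    and tail_cost_split_at_adm_suffix: "tail_cost X a (take (length x - s) x) s + real s * a (q + s) \<le> tail_cost X a x q"
proof -
  show "s \<le> length x"
    using assms adm_suffix_len_le[OF X_ne, of x] by (simp add: Suc_le_eq)
  show "admissible X (drop (length x - s) x) \<or> s = 1"
    using admissible_drop_adm_suffix_len[OF X_ne, of x] unfolding s_def by (cases "adm_suffix_len X x") auto
  have "\<not> admissible X (drop k (take (length x - s) x @ drop (length x - s) x))"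
    if "k < length (take (length x - s) x)" for k
    using that not_admissible_drop_before_adm_suffix[of k x X] unfolding s_def by simp
  from tail_cost_append_ge[OF X_ne antimono_a this, of q] \<open>s \<le> length x\<close>
  show "tail_cost X a (take (length x - s) x) s + real s * a (q + s) \<le> tail_cost X a x q"
    by simp
qed

lemma tail_partition_step:
  assumes "l \<ge> 1"
    and "(\<Sum>u\<in>{u::'a list. length u = k}. exp (- \<beta>\<^sub>0 * tail_cost X a u l)) \<le> exp (V l)"
  shows "real (card {y::'a list. length y = l \<and> (admissible X y \<or> l = 1)})
      * (\<Sum>u\<in>{u::'a list. length u = k}. exp (- \<beta>\<^sub>0 * (tail_cost X a u l + real l * a (q + l))))
      \<le> exp (V q) * (1 / (real l * (real l + 1)))"
proof -
  have "(\<Sum>u\<in>{u::'a list. length u = k}. exp (- \<beta>\<^sub>0 * (tail_cost X a u l + real l * a (q + l))))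
      = exp (- \<beta>\<^sub>0 * real l * a (q + l)) * (\<Sum>u\<in>{u::'a list. length u = k}. exp (- \<beta>\<^sub>0 * tail_cost X a u l))"
    by (simp add: sum_distrib_left exp_add[symmetric] algebra_simps)
  also have "\<dots> \<le> exp (- \<beta>\<^sub>0 * real l * a (q + l)) * exp (V l)"
    using assms(2) by (intro mult_left_mono) auto
  finally have "real (card {y::'a list. length y = l \<and> (admissible X y \<or> l = 1)})
      * (\<Sum>u\<in>{u::'a list. length u = k}. exp (- \<beta>\<^sub>0 * (tail_cost X a u l + real l * a (q + l))))
      \<le> Cc * (real l + 1)^d * (exp (- \<beta>\<^sub>0 * real l * a (q + l)) * exp (V l))"
    using card_tail_words_le[OF assms(1)] by (intro mult_mono) (auto intro: sum_nonneg)
  also have "\<dots> \<le> exp (V q) * (1 / (real l * (real l + 1)))"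
    using tail_step_le[OF assms(1), of q] by (simp add: algebra_simps)
  finally show ?thesis .
qed

text \<open>Induction on the length: cut off the longest admissible suffix (at least one letter) of
  length \<open>l\<close>; by \<open>tail_partition_step\<close> the words cut at \<open>l\<close> contribute at most
  \<open>exp (V q) / (l (l + 1))\<close>, and these bounds sum to less than \<open>exp (V q)\<close>.\<close>
lemma tail_partition_le:
  "(\<Sum>x\<in>{x::'a list. length x = m}. exp (- \<beta>\<^sub>0 * tail_cost X a x q)) \<le> exp (V q)"
proof (induction m arbitrary: q rule: less_induct)
  case (less m)
  show ?case
  proof (cases "m = 0")
    case True
    then show ?thesis using V_nonneg by (simp add: tail_cost_def)
  next
    case False
    define s where "s x = max 1 (adm_suffix_len X x)" for x :: "'a list"
    define Y where "Y l = {y::'a list. length y = l \<and> (admissible X y \<or> l = 1)}" for l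
    define g where "g l u = exp (- \<beta>\<^sub>0 * (tail_cost X a u l + real l * a (q + l)))" for l u
    have "(\<Sum>x\<in>{x::'a list. length x = m}. exp (- \<beta>\<^sub>0 * tail_cost X a x q))
        \<le> (\<Sum>l=1..m. real (card (Y l)) * (\<Sum>u\<in>{u. length u = m - l}. g l u))"
    proof (rule sum_lists_split_bound[where s=s])
      fix x :: "'a list" assume x: "length x = m"
      then have "x \<noteq> []" using False by auto
      have s: "1 \<le> s x" "s x \<le> m"
        using max_1_adm_suffix_len_le[OF \<open>x \<noteq> []\<close>] x by (simp_all add: s_def)
      have "drop (m - s x) x \<in> Y (s x)"
        using admissible_drop_max_1_adm_suffix_len[OF \<open>x \<noteq> []\<close>] x s unfolding Y_def s_def by simp
      moreover have "exp (- \<beta>\<^sub>0 * tail_cost X a x q) \<le> g (s x) (take (m - s x) x)"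
        using tail_cost_split_at_adm_suffix[OF \<open>x \<noteq> []\<close>, of q] beta0_nonneg x
        unfolding g_def s_def by (simp add: mult_left_mono)
      ultimately show "s x \<in> {1..m} \<and> s x \<le> m \<and> drop (m - s x) x \<in> Y (s x)
          \<and> exp (- \<beta>\<^sub>0 * tail_cost X a x q) \<le> g (s x) (take (m - s x) x)"
        using s by simp
    qed (auto simp: Y_def g_def intro: finite_subset[OF _ finite_length_lists])
    also have "\<dots> \<le> (\<Sum>l=1..m. exp (V q) * (1 / (real l * (real l + 1))))"
      using less False unfolding Y_def g_def by (intro sum_mono tail_partition_step) auto
    also have "\<dots> = exp (V q) * (1 - 1 / (real m + 1))"
      by (simp only: sum_distrib_left[symmetric] sum_inverse_pronic)
    also have "\<dots> \<le> exp (V q)"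
      by (simp add: mult_left_le)
    finally show ?thesis .
  qed
qed

definition partition_fn :: "nat \<Rightarrow> real" where
  "partition_fn n = (\<Sum>w\<in>{w::'a list. length w = n}. exp (- \<beta>\<^sub>0 * word_cost X a w))"

lemma partition_fn_pos: "partition_fn n > 0"
  unfolding partition_fn_def using finite_length_lists[of n]
  by (intro sum_pos) (auto intro: exI[of _ "replicate n undefined"])

lemma word_cost_ge_tail_cost:
  fixes x :: "'a list"
  defines "s \<equiv> adm_suffix_len X x"
  shows "tail_cost X a (take (length x - s) x) s \<le> word_cost X a x"
proof -
  have "\<not> admissible X (drop k (take (length x - s) x @ drop (length x - s) x))"
    if "k < length (take (length x - s) x)" for k
    using that not_admissible_drop_before_adm_suffix[of k x X] unfolding s_def by simp
  from tail_cost_le_word_cost_append[OF X_ne antimono_a a_nonneg this] adm_suffix_len_le[OF X_ne, of x]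
  show ?thesis unfolding s_def by simp
qed

lemma partition_fn_le: "partition_fn n \<le> (real n + 1) * (Cc * (real n + 1)^d * exp (V n))"
proof -
  define g where "g l u = exp (- \<beta>\<^sub>0 * tail_cost X a u l)" for l u
  have "partition_fn n \<le> (\<Sum>l=0..n. real (card (language X l)) * (\<Sum>u\<in>{u. length u = n - l}. g l u))"
    unfolding partition_fn_def
  proof (rule sum_lists_split_bound[where s="adm_suffix_len X"])
    fix x :: "'a list" assume "length x = n"
    with adm_suffix_len_le[OF X_ne, of x] admissible_drop_adm_suffix_len[OF X_ne, of x]
      word_cost_ge_tail_cost[of x]
    show "adm_suffix_len X x \<in> {0..n} \<and> adm_suffix_len X x \<le> n
        \<and> drop (n - adm_suffix_len X x) x \<in> language X (adm_suffix_len X x)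
        \<and> exp (- \<beta>\<^sub>0 * word_cost X a x) \<le> g (adm_suffix_len X x) (take (n - adm_suffix_len X x) x)"
      unfolding g_def language_eq_admissible using beta0_nonneg by (auto simp: mult_left_mono)
  qed (auto simp: g_def finite_language)
  also have "\<dots> \<le> (\<Sum>l=0..n. Cc * (real n + 1)^d * exp (V n))"
  proof (rule sum_mono)
    fix l assume l: "l \<in> {0..n}"
    have "real (card (language X l)) * (\<Sum>u\<in>{u. length u = n - l}. g l u) \<le> Cc * (real l + 1)^d * exp (V l)"
      using complexity_le_Cc[of l] tail_partition_le[where m="n - l" and q=l] unfolding complexity_def g_def
      by (intro mult_mono) (auto intro: sum_nonneg)
    also have "\<dots> \<le> Cc * (real n + 1)^d * exp (V n)"
      using l Cc_ge_1 V_mono[of l n] by (intro mult_mono power_mono) auto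
    finally show "real (card (language X l)) * (\<Sum>u\<in>{u. length u = n - l}. g l u) \<le> Cc * (real n + 1)^d * exp (V n)" .
  qed
  also have "\<dots> = (real n + 1) * (Cc * (real n + 1)^d * exp (V n))"
    by simp
  finally show ?thesis .
qed

lemma ln_partition_fn_le:
  "ln (partition_fn n) \<le> (real d + 1) * ln (real n + 1) + ln Cc + \<gamma> * ln (real n + 1)^2"
proof -
  have "ln (partition_fn n) \<le> ln ((real n + 1) * (Cc * (real n + 1)^d * exp (V n)))"
    using partition_fn_pos[of n] partition_fn_le[of n] Cc_ge_1 by simp
  also have "\<dots> = ln (real n + 1) + (ln Cc + ln ((real n + 1)^d)) + V n"
    using Cc_ge_1 by (simp add: ln_mult)
  also have "\<dots> = (real d + 1) * ln (real n + 1) + ln Cc + \<gamma> * ln (real n + 1)^2"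
    by (simp add: ln_realpow V_def algebra_simps)
  finally show ?thesis .
qed

end

section \<open>Cylinders and shift-invariant measures\<close>

definition pref :: "nat \<Rightarrow> (nat \<Rightarrow> 'a) \<Rightarrow> 'a list" where
  "pref n x = map x [0..<n]"

lemma length_pref [simp]: "length (pref n x) = n"
  unfolding pref_def by simp

lemma take_pref: "j \<le> m \<Longrightarrow> take j (pref m x) = pref j x"
  unfolding pref_def by (simp add: take_map)

lemma mem_cyl_iff_pref: "x \<in> cyl w \<longleftrightarrow> pref (length w) x = w"
proof
  assume "pref (length w) x = w"
  then have "x i = w ! i" if "i < length w" for i
    using that unfolding pref_def by (metis add_0 diff_zero nth_map_upt)
  then show "x \<in> cyl w"
    unfolding cyl_def by simp
qed (auto simp: cyl_def pref_def intro: nth_equalityI)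

lemma space_shift_space: "space shift_space = UNIV"
  unfolding shift_space_def by (simp add: space_PiM)

lemma sets_coordinate: "{x. x i = c} \<in> sets shift_space"
proof -
  have "(\<lambda>x. x i) \<in> measurable shift_space (count_space UNIV)"
    unfolding shift_space_def by (rule measurable_component_singleton) simp
  then have "(\<lambda>x. x i) -` {c} \<inter> space shift_space \<in> sets shift_space"
    by (rule measurable_sets) simp
  then show ?thesis by (simp add: space_shift_space vimage_def)
qed

lemma cyl_snoc: "cyl (w @ [c]) = cyl w \<inter> {x. x (length w) = c}"
  unfolding cyl_def by (auto simp: nth_append less_Suc_eq)

lemma cyl_Cons: "cyl (c # v) = {x. x 0 = c} \<inter> shift -` cyl v"
  unfolding cyl_def shift_def by (auto simp: less_Suc_eq_0_disj)

lemma sets_cyl: "cyl w \<in> sets shift_space"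
proof (induction w rule: rev_induct)
  case Nil
  have "cyl [] = space shift_space" unfolding cyl_def space_shift_space by simp
  then show ?case by (metis sets.top)
next
  case (snoc c w)
  then show ?case using sets.Int[OF snoc sets_coordinate] by (simp add: cyl_snoc)
qed

lemma measurable_pref: "(pref n :: (nat \<Rightarrow> 'a::finite) \<Rightarrow> 'a list) \<in> shift_space \<rightarrow>\<^sub>M count_space UNIV"
proof (subst measurable_count_space_eq2_countable, intro conjI ballI)
  fix w :: "'a list"
  have "pref n -` {w} = (if length w = n then cyl w else {})"
    using mem_cyl_iff_pref[of _ w] by auto
  then show "pref n -` {w} \<inter> space shift_space \<in> sets shift_space"
    using sets_cyl[of w] by (simp add: space_shift_space)
qed simp

lemma sets_pref_Collect: "{x::nat \<Rightarrow> 'a::finite. P (pref n x)} \<in> sets shift_space"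
  using measurable_sets[OF measurable_pref, of "{w. P w}" n] by (simp add: space_shift_space vimage_def)

lemma borel_measurable_pref: "(\<lambda>x::nat \<Rightarrow> 'a::finite. f (pref n x)) \<in> borel_measurable shift_space"
  using measurable_compose[OF measurable_pref, of f borel] by (simp add: o_def)

lemma shift_measurable: "shift \<in> shift_space \<rightarrow>\<^sub>M shift_space"
proof -
  have "(\<lambda>\<omega> i. \<omega> (Suc i)) \<in> shift_space \<rightarrow>\<^sub>M Pi\<^sub>M UNIV (\<lambda>_. count_space UNIV)"
    by (rule measurable_PiM_single') (simp_all add: shift_space_def)
  then show ?thesis
    unfolding shift_def[abs_def] shift_space_def[symmetric] by simp
qed

lemma pref_eq_sum_indicator:
  fixes f :: "'a::finite list \<Rightarrow> real"
  shows "f (pref m x) = (\<Sum>v\<in>{v. length v = m}. f v * indicator (cyl v) x)"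
proof -
  have "(\<Sum>v\<in>{v. length v = m}. f v * indicator (cyl v) x)
      = (\<Sum>v\<in>{v. length v = m}. if v = pref m x then f v else 0)"
    by (intro sum.cong) (auto simp: indicator_def mem_cyl_iff_pref)
  then show ?thesis
    by (simp add: sum.delta[OF finite_length_lists])
qed

locale shift_invariant =
  fixes \<nu> :: "(nat \<Rightarrow> 'a::finite) measure"
  assumes inv_measure: "inv_measure \<nu>"
begin

lemma sets_eq: "sets \<nu> = sets shift_space"
  using inv_measure unfolding inv_measure_def by simp

lemma emeasure_shift_vimage: "A \<in> sets shift_space \<Longrightarrow> emeasure \<nu> (shift -` A) = emeasure \<nu> A"
  using inv_measure unfolding inv_measure_def by simp

sublocale prob_space \<nu>
  using inv_measure unfolding inv_measure_def by simp

lemma space_eq: "space \<nu> = UNIV"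
  using sets_eq_imp_space_eq[OF sets_eq] space_shift_space by simp

lemma cyl_in_sets: "cyl w \<in> sets \<nu>"
  using sets_cyl sets_eq by simp

definition cyl_prob :: "'a list \<Rightarrow> real" where
  "cyl_prob w = measure \<nu> (cyl w)"

lemma cyl_prob_nonneg: "cyl_prob w \<ge> 0"
  unfolding cyl_prob_def by simp

lemma cyl_prob_le_1: "cyl_prob w \<le> 1"
  unfolding cyl_prob_def by simp

lemma cyl_prob_Nil: "cyl_prob [] = 1"
  using prob_space by (simp add: cyl_prob_def cyl_def space_eq[symmetric])

lemma measure_disjoint_UN_cyl:
  fixes f :: "'a \<Rightarrow> 'a list"
  assumes "A = (\<Union>c. cyl (f c))" "disjoint_family (\<lambda>c. cyl (f c))"
  shows "measure \<nu> A = (\<Sum>c\<in>UNIV. cyl_prob (f c))"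
  unfolding assms(1) cyl_prob_def using cyl_in_sets assms(2)
  by (intro finite_measure_finite_Union) auto

lemma cyl_prob_snoc: "cyl_prob u = (\<Sum>c\<in>UNIV. cyl_prob (u @ [c]))"
proof -
  have "cyl u = (\<Union>c. cyl (u @ [c]))"
    by (auto simp: cyl_snoc)
  moreover have "disjoint_family (\<lambda>c. cyl (u @ [c]))"
    by (auto simp: disjoint_family_on_def cyl_snoc)
  ultimately show ?thesis
    using measure_disjoint_UN_cyl[of "cyl u" "\<lambda>c. u @ [c]"] by (simp add: cyl_prob_def)
qed

text \<open>This is where the shift invariance of \<open>\<nu>\<close> enters.\<close>
lemma cyl_prob_Cons: "cyl_prob v = (\<Sum>c\<in>UNIV. cyl_prob (c # v))"
proof -
  have "shift -` cyl v = (\<Union>c. cyl (c # v))"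
    by (auto simp: cyl_Cons)
  moreover have "disjoint_family (\<lambda>c. cyl (c # v))"
    by (auto simp: disjoint_family_on_def cyl_Cons)
  moreover have "measure \<nu> (shift -` cyl v) = cyl_prob v"
    unfolding cyl_prob_def measure_def using emeasure_shift_vimage[OF sets_cyl] by simp
  ultimately show ?thesis
    using measure_disjoint_UN_cyl[of "shift -` cyl v" "\<lambda>c. c # v"] by simp
qed

lemma cyl_prob_extend_right: "cyl_prob u = (\<Sum>v\<in>{v::'a list. length v = n}. cyl_prob (u @ v))"
proof (induction n arbitrary: u)
  case (Suc n)
  have "(\<Sum>v\<in>{v::'a list. length v = Suc n}. cyl_prob (u @ v))
      = (\<Sum>c\<in>UNIV. \<Sum>v\<in>{v. length v = n}. cyl_prob ((u @ [c]) @ v))"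
    by (simp add: sum_lists_length_Suc)
  also have "\<dots> = cyl_prob u"
    by (simp only: Suc.IH[symmetric] cyl_prob_snoc[symmetric])
  finally show ?case ..
qed simp

lemma cyl_prob_extend_left: "cyl_prob v = (\<Sum>u\<in>{u::'a list. length u = m}. cyl_prob (u @ v))"
proof (induction m arbitrary: v)
  case (Suc m)
  have "(\<Sum>u\<in>{u::'a list. length u = Suc m}. cyl_prob (u @ v))
      = (\<Sum>u\<in>{u. length u = m}. \<Sum>c\<in>UNIV. cyl_prob (c # (u @ v)))"
    by (simp add: sum_lists_length_Suc sum.swap[of _ UNIV])
  also have "\<dots> = cyl_prob v"
    by (simp only: cyl_prob_Cons[symmetric] Suc.IH[symmetric])
  finally show ?case ..
qed simp

lemma
  fixes f :: "'a list \<Rightarrow> real"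
  shows integrable_pref: "integrable \<nu> (\<lambda>x. f (pref m x))"
    and integral_pref: "(\<integral>x. f (pref m x) \<partial>\<nu>) = (\<Sum>v\<in>{v. length v = m}. cyl_prob v * f v)"
proof -
  have int: "integrable \<nu> (\<lambda>x. f v * indicator (cyl v) x)" for v
    using cyl_in_sets emeasure_finite[of "cyl v"]
    by (intro integrable_mult_right integrable_real_indicator) (simp_all add: less_top[symmetric])
  have eq: "(\<lambda>x. f (pref m x)) = (\<lambda>x. \<Sum>v\<in>{v. length v = m}. f v * indicator (cyl v) x)"
    by (rule ext) (rule pref_eq_sum_indicator)
  show "integrable \<nu> (\<lambda>x. f (pref m x))"
    unfolding eq by (rule Bochner_Integration.integrable_sum) (rule int)
  show "(\<integral>x. f (pref m x) \<partial>\<nu>) = (\<Sum>v\<in>{v. length v = m}. cyl_prob v * f v)"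
    unfolding eq using int by (simp add: cyl_prob_def space_eq mult.commute)
qed

lemma sum_cyl_prob: "(\<Sum>w\<in>{w::'a list. length w = n}. cyl_prob w) = 1"
  using cyl_prob_extend_right[of "[]" n] cyl_prob_Nil by simp

lemma block_entropy_eq: "block_entropy \<nu> n = (\<Sum>w\<in>{w::'a list. length w = n}. - cyl_prob w * ln (cyl_prob w))"
  unfolding block_entropy_def cyl_prob_def by simp

lemma block_entropy_nonneg: "block_entropy \<nu> n \<ge> 0"
  unfolding block_entropy_eq
proof (rule sum_nonneg)
  fix w :: "'a list"
  have "ln (cyl_prob w) \<le> 0"
  proof (cases "cyl_prob w = 0")
    case False
    then have "cyl_prob w > 0" using cyl_prob_nonneg[of w] by simp
    then show ?thesis using cyl_prob_le_1[of w] by simp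
  qed simp
  then show "0 \<le> - cyl_prob w * ln (cyl_prob w)"
    using cyl_prob_nonneg by (simp add: mult_nonneg_nonpos)
qed

lemma block_entropy_subadditive: "block_entropy \<nu> (m + n) \<le> block_entropy \<nu> m + block_entropy \<nu> n"
proof -
  let ?U = "{u::'a list. length u = m}" and ?V = "{v::'a list. length v = n}"
  have "block_entropy \<nu> (m + n) = (\<Sum>u\<in>?U. \<Sum>v\<in>?V. - cyl_prob (u @ v) * ln (cyl_prob (u @ v)))"
    unfolding block_entropy_eq by (rule sum_lists_length_add)
  also have "\<dots> \<le> (\<Sum>u\<in>?U. - (\<Sum>v\<in>?V. cyl_prob (u @ v)) * ln (\<Sum>v\<in>?V. cyl_prob (u @ v)))
                 + (\<Sum>v\<in>?V. - (\<Sum>u\<in>?U. cyl_prob (u @ v)) * ln (\<Sum>u\<in>?U. cyl_prob (u @ v)))"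
  proof (rule entropy_joint_le_marginals)
    show "(\<Sum>u\<in>?U. \<Sum>v\<in>?V. cyl_prob (u @ v)) = 1"
      using sum_cyl_prob[of "m + n"] sum_lists_length_add[of cyl_prob m n] by simp
  qed (simp_all add: finite_length_lists cyl_prob_nonneg)
  also have "\<dots> = block_entropy \<nu> m + block_entropy \<nu> n"
    unfolding block_entropy_eq by (simp flip: cyl_prob_extend_right cyl_prob_extend_left)
  finally show ?thesis .
qed

lemma ks_entropy_LIMSEQ: "(\<lambda>n. block_entropy \<nu> n / real n) \<longlonglongrightarrow> ks_entropy \<nu>"
  using fekete_convergent[of "block_entropy \<nu>", OF block_entropy_nonneg block_entropy_subadditive]
  unfolding ks_entropy_def by (simp add: convergent_LIMSEQ_iff)

end

section \<open>The distance potential\<close>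

locale distance_potential = freezing_setup X a C d
  for X :: "(nat \<Rightarrow> 'a::finite) set" and a C d +
  fixes \<phi> :: "(nat \<Rightarrow> 'a) \<Rightarrow> real"
  assumes X_closed: "shift_closed X"
    and phi_in_X: "\<And>x. x \<in> X \<Longrightarrow> \<phi> x = 0"
    and phi_dist: "\<And>x j. x \<notin> X \<Longrightarrow> shift_setdist x X = (1/2)^j \<Longrightarrow> \<phi> x = - a j"
begin

lemma admissible_pref: "x \<in> X \<Longrightarrow> admissible X (pref n x)"
  unfolding admissible_def pref_def by auto

lemma admissible_pref_mono: "admissible X (pref n x) \<Longrightarrow> m \<le> n \<Longrightarrow> admissible X (pref m x)"
  using admissible_take[of X "pref n x" m] take_pref[of m n x] by simp

lemma ex_not_admissible_pref:
  assumes "x \<notin> X"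
  shows "\<exists>n. \<not> admissible X (pref n x)"
proof (rule ccontr)
  assume "\<nexists>n. \<not> admissible X (pref n x)"
  then have "\<exists>y\<in>X. \<forall>i<n. x i = y i" for n
    unfolding admissible_def pref_def by (metis add_0 diff_zero length_map length_upt nth_map_upt)
  then have "x \<in> X"
    using X_closed unfolding shift_closed_def by blast
  with assms show False ..
qed

text \<open>For \<open>x \<notin> X\<close>, \<open>adm_depth x\<close> is the length of the longest admissible prefix of \<open>x\<close>,
  i.e. \<open>- log\<^sub>2\<close> of the distance from \<open>x\<close> to \<open>X\<close> (lemma \<open>shift_setdist_eq\<close>).\<close>
definition adm_depth :: "(nat \<Rightarrow> 'a) \<Rightarrow> nat" where
  "adm_depth x = (LEAST j. \<not> admissible X (pref (Suc j) x))"

lemma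
  assumes "x \<notin> X"
  shows not_admissible_pref_Suc_adm_depth: "\<not> admissible X (pref (Suc (adm_depth x)) x)"
    and admissible_pref_adm_depth: "admissible X (pref (adm_depth x) x)"
proof -
  obtain n where n: "\<not> admissible X (pref n x)"
    using ex_not_admissible_pref[OF assms] by blast
  moreover have "n \<noteq> 0"
    using n admissible_Nil[OF X_ne] by (cases n) (auto simp: pref_def)
  ultimately have ex: "\<exists>j. \<not> admissible X (pref (Suc j) x)"
    by (metis not0_implies_Suc)
  then show "\<not> admissible X (pref (Suc (adm_depth x)) x)"
    unfolding adm_depth_def by (rule LeastI_ex)
  show "admissible X (pref (adm_depth x) x)"
  proof (cases "adm_depth x")
    case 0
    then show ?thesis using admissible_Nil[OF X_ne] by (simp add: pref_def)
  next
    case (Suc j)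
    then have "j < adm_depth x" by simp
    then have "\<not> \<not> admissible X (pref (Suc j) x)"
      unfolding adm_depth_def by (rule not_less_Least)
    then show ?thesis using Suc by simp
  qed
qed

lemma admissible_pref_iff:
  assumes "x \<notin> X"
  shows "admissible X (pref n x) \<longleftrightarrow> n \<le> adm_depth x"
proof
  assume "admissible X (pref n x)"
  then show "n \<le> adm_depth x"
    using admissible_pref_mono[of n x "Suc (adm_depth x)"] not_admissible_pref_Suc_adm_depth[OF assms]
    by (metis not_less_eq_eq)
qed (rule admissible_pref_mono[OF admissible_pref_adm_depth[OF assms]])

lemma sdist_ge_adm_depth:
  assumes x: "x \<notin> X" and y: "y \<in> X"
  shows "sdist x y \<ge> (1/2)^(adm_depth x)"
proof -
  have "x \<noteq> y" using x y by auto
  have "\<exists>i\<le>adm_depth x. x i \<noteq> y i"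
  proof (rule ccontr)
    assume "\<not> (\<exists>i\<le>adm_depth x. x i \<noteq> y i)"
    then have "\<forall>i<Suc (adm_depth x). y i = pref (Suc (adm_depth x)) x ! i"
      unfolding pref_def by (simp del: upt_Suc)
    then have "admissible X (pref (Suc (adm_depth x)) x)"
      using y unfolding admissible_def by auto
    then show False using not_admissible_pref_Suc_adm_depth[OF x] by simp
  qed
  then have "(LEAST i. x i \<noteq> y i) \<le> adm_depth x"
    by (meson Least_le order_trans)
  then have "(1/2::real)^(adm_depth x) \<le> (1/2)^(LEAST i. x i \<noteq> y i)"
    by (rule power_decreasing) auto
  then show ?thesis unfolding sdist_def using \<open>x \<noteq> y\<close> by simp
qed

lemma shift_setdist_eq:
  assumes x: "x \<notin> X"
  shows "shift_setdist x X = (1/2)^(adm_depth x)"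
proof -
  obtain y where y: "y \<in> X" "\<forall>i<adm_depth x. x i = y i"
    using admissible_pref_adm_depth[OF x] unfolding admissible_def pref_def by auto
  have "x \<noteq> y" using x y by auto
  then have "\<exists>i. x i \<noteq> y i" by auto
  then have "x (LEAST i. x i \<noteq> y i) \<noteq> y (LEAST i. x i \<noteq> y i)"
    by (rule LeastI_ex)
  then have "\<not> (LEAST i. x i \<noteq> y i) < adm_depth x"
    using y(2) by auto
  then have "adm_depth x \<le> (LEAST i. x i \<noteq> y i)"
    by simp
  then have "sdist x y \<le> (1/2)^(adm_depth x)"
    unfolding sdist_def using \<open>x \<noteq> y\<close> by (simp add: power_decreasing)
  then have "sdist x y = (1/2)^(adm_depth x)"
    using sdist_ge_adm_depth[OF x y(1)] by simp
  show ?thesis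
    unfolding shift_setdist_def
  proof (rule cInf_eq_minimum)
    show "(1/2)^(adm_depth x) \<in> sdist x ` X"
      using \<open>sdist x y = (1/2)^(adm_depth x)\<close> y(1) by (metis image_eqI)
  qed (use sdist_ge_adm_depth[OF x] in auto)
qed

lemma phi_not_in_X: "x \<notin> X \<Longrightarrow> \<phi> x = - a (adm_depth x)"
  using phi_dist shift_setdist_eq by blast

lemma phi_nonpos: "\<phi> x \<le> 0"
  using phi_in_X phi_not_in_X a_nonneg by (cases "x \<in> X") auto

lemma phi_neg: "x \<notin> X \<Longrightarrow> \<phi> x < 0"
  using phi_not_in_X a_pos by simp

lemma abs_phi_le: "\<bar>\<phi> x\<bar> \<le> a 0"
  using phi_nonpos[of x] phi_in_X[of x] phi_not_in_X[of x] a_nonneg[of 0]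
    antimonoD[OF antimono_a, of 0 "adm_depth x"]
  by (cases "x \<in> X") auto

lemma adm_prefix_len_pref:
  assumes "\<not> admissible X (pref m x)"
  shows "x \<notin> X" "adm_prefix_len X (pref m x) = adm_depth x"
proof -
  show x: "x \<notin> X" using assms admissible_pref by blast
  then have "adm_depth x < m" using assms admissible_pref_iff by simp
  then have "adm_depth x \<le> adm_prefix_len X (pref m x)"
    using admissible_pref_adm_depth[OF x] take_pref[of "adm_depth x" m x]
    by (intro le_adm_prefix_len) simp_all
  moreover have "adm_prefix_len X (pref m x) \<le> adm_depth x"
    using admissible_take_adm_prefix_len[OF X_ne, of "pref m x"] adm_prefix_len_le[OF X_ne, of "pref m x"]
      take_pref[of "adm_prefix_len X (pref m x)" m x] admissible_pref_iff[OF x]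
    by simp
  ultimately show "adm_prefix_len X (pref m x) = adm_depth x" by simp
qed

lemma penalty_pref_le: "penalty X a (pref m x) \<le> - \<phi> x"
  using phi_nonpos[of x] adm_prefix_len_pref[of m x] phi_not_in_X[of x]
  unfolding penalty_def by auto

lemma penalty_pref_LIMSEQ: "(\<lambda>n. - penalty X a (pref n x)) \<longlonglongrightarrow> \<phi> x"
proof (cases "x \<in> X")
  case True
  then show ?thesis
    using admissible_pref phi_in_X by (simp add: penalty_def)
next
  case False
  have "\<forall>\<^sub>F n in sequentially. - penalty X a (pref n x) = \<phi> x"
  proof (rule eventually_sequentiallyI[of "Suc (adm_depth x)"])
    fix n assume "Suc (adm_depth x) \<le> n"
    then have "\<not> admissible X (pref n x)" using admissible_pref_iff[OF False] by simp
    then show "- penalty X a (pref n x) = \<phi> x"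
      unfolding penalty_def using adm_prefix_len_pref phi_not_in_X[OF False] by simp
  qed
  then show ?thesis by (rule tendsto_eventually)
qed

lemma borel_measurable_phi: "\<phi> \<in> borel_measurable shift_space"
  by (rule borel_measurable_LIMSEQ_real[OF penalty_pref_LIMSEQ]) (rule borel_measurable_pref)

lemma sets_X: "X \<in> sets shift_space"
proof -
  have "X = (\<Inter>n. {x. admissible X (pref n x)})"
  proof (intro equalityI subsetI)
    fix x assume "x \<in> (\<Inter>n. {x. admissible X (pref n x)})"
    then show "x \<in> X" using ex_not_admissible_pref by blast
  qed (simp add: admissible_pref)
  also have "\<dots> \<in> sets shift_space"
    by (rule sets.countable_INT) (auto intro: sets_pref_Collect)
  finally show ?thesis .
qed

end

section \<open>Entropy bound and freezing\<close>

locale invariant_potential = distance_potential X a C d \<phi> + shift_invariant \<nu>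
  for X :: "(nat \<Rightarrow> 'a::finite) set" and a C d \<phi> and \<nu> :: "(nat \<Rightarrow> 'a) measure"
begin

lemma integrable_phi: "integrable \<nu> \<phi>"
proof (rule integrable_const_bound[where B="a 0"])
  show "\<phi> \<in> borel_measurable \<nu>"
    using borel_measurable_phi by (simp add: measurable_cong_sets[OF sets_eq refl])
qed (simp add: abs_phi_le)

lemma integral_minus_phi_nonneg: "(\<integral>x. - \<phi> x \<partial>\<nu>) \<ge> 0"
  by (rule integral_nonneg_AE) (simp add: phi_nonpos)

lemma expected_penalty_le: "(\<Sum>v\<in>{v. length v = m}. cyl_prob v * penalty X a v) \<le> (\<integral>x. - \<phi> x \<partial>\<nu>)"
proof -
  have "(\<integral>x. penalty X a (pref m x) \<partial>\<nu>) \<le> (\<integral>x. - \<phi> x \<partial>\<nu>)"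
    by (rule integral_mono[OF integrable_pref integrable_minus[OF integrable_phi]]) (rule penalty_pref_le)
  then show ?thesis
    by (simp add: integral_pref)
qed

lemma expected_word_cost_le:
  "(\<Sum>w\<in>{w. length w = n}. cyl_prob w * word_cost X a w) \<le> real n * (\<integral>x. - \<phi> x \<partial>\<nu>)"
proof -
  have per_position: "(\<Sum>w\<in>{w. length w = n}. cyl_prob w * penalty X a (drop k w)) \<le> (\<integral>x. - \<phi> x \<partial>\<nu>)"
    if "k < n" for k
  proof -
    have nk: "n = k + (n - k)" using that by simp
    have "(\<Sum>w\<in>{w. length w = n}. cyl_prob w * penalty X a (drop k w))
        = (\<Sum>u\<in>{u. length u = k}. \<Sum>v\<in>{v. length v = n - k}. cyl_prob (u @ v) * penalty X a (drop k (u @ v)))"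
      by (subst nk) (rule sum_lists_length_add)
    also have "\<dots> = (\<Sum>u\<in>{u. length u = k}. \<Sum>v\<in>{v. length v = n - k}. cyl_prob (u @ v) * penalty X a v)"
      by (intro sum.cong refl) simp
    also have "\<dots> = (\<Sum>v\<in>{v. length v = n - k}. (\<Sum>u\<in>{u. length u = k}. cyl_prob (u @ v)) * penalty X a v)"
      by (subst sum.swap) (simp add: sum_distrib_right)
    also have "\<dots> = (\<Sum>v\<in>{v. length v = n - k}. cyl_prob v * penalty X a v)"
      by (simp flip: cyl_prob_extend_left)
    also have "\<dots> \<le> (\<integral>x. - \<phi> x \<partial>\<nu>)"
      by (rule expected_penalty_le)
    finally show ?thesis .
  qed
  have "(\<Sum>w\<in>{w. length w = n}. cyl_prob w * word_cost X a w)
      = (\<Sum>w\<in>{w. length w = n}. \<Sum>k<n. cyl_prob w * penalty X a (drop k w))"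
    unfolding word_cost_def by (rule sum.cong) (simp_all add: sum_distrib_left)
  also have "\<dots> = (\<Sum>k<n. \<Sum>w\<in>{w. length w = n}. cyl_prob w * penalty X a (drop k w))"
    by (rule sum.swap)
  also have "\<dots> \<le> (\<Sum>k<n. (\<integral>x. - \<phi> x \<partial>\<nu>))"
    by (intro sum_mono per_position) simp
  also have "\<dots> = real n * (\<integral>x. - \<phi> x \<partial>\<nu>)"
    by simp
  finally show ?thesis .
qed

text \<open>The core estimate: Gibbs' inequality against the weights \<open>exp (- \<beta>\<^sub>0 word_cost)\<close>, whose
  total mass \<open>partition_fn n\<close> grows subexponentially.\<close>
lemma block_entropy_le:
  "block_entropy \<nu> n \<le> \<beta>\<^sub>0 * (real n * (\<integral>x. - \<phi> x \<partial>\<nu>)) + ln (partition_fn n)"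
proof -
  have "block_entropy \<nu> n
      \<le> \<beta>\<^sub>0 * (\<Sum>w\<in>{w. length w = n}. cyl_prob w * word_cost X a w) + ln (partition_fn n)"
    unfolding block_entropy_eq partition_fn_def
    by (rule gibbs_ineq) (simp_all add: finite_length_lists cyl_prob_nonneg sum_cyl_prob)
  then show ?thesis
    using mult_left_mono[OF expected_word_cost_le[of n] beta0_nonneg] by linarith
qed

lemma ks_entropy_le: "ks_entropy \<nu> \<le> \<beta>\<^sub>0 * (\<integral>x. - \<phi> x \<partial>\<nu>)"
proof -
  let ?I = "\<integral>x. - \<phi> x \<partial>\<nu>"
  let ?R = "\<lambda>n. ln Cc + (real d + 1) * ln (real n + 1) + \<gamma> * ln (real n + 1)^2"
  have "block_entropy \<nu> n / real n \<le> \<beta>\<^sub>0 * ?I + ?R n / real n" if "n \<ge> 1" for n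
  proof -
    have "block_entropy \<nu> n \<le> \<beta>\<^sub>0 * (real n * ?I) + ?R n"
      using block_entropy_le[of n] ln_partition_fn_le[of n] by linarith
    then have "block_entropy \<nu> n / real n \<le> (\<beta>\<^sub>0 * (real n * ?I) + ?R n) / real n"
      by (intro divide_right_mono) auto
    also have "\<dots> = \<beta>\<^sub>0 * ?I + ?R n / real n"
      using that by (simp add: field_simps)
    finally show ?thesis .
  qed
  moreover have "(\<lambda>n. \<beta>\<^sub>0 * ?I + ?R n / real n) \<longlonglongrightarrow> \<beta>\<^sub>0 * ?I + 0"
    by (intro tendsto_add tendsto_const LIMSEQ_ln_square_div)
  ultimately show ?thesis
    using LIMSEQ_le[OF ks_entropy_LIMSEQ] by auto
qed

lemma cyl_prob_not_admissible:
  assumes "emeasure \<nu> X = 1" "\<not> admissible X w"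
  shows "cyl_prob w = 0"
proof -
  have X: "X \<in> sets \<nu>" using sets_X sets_eq by simp
  have "cyl w \<subseteq> space \<nu> - X"
    using assms(2) unfolding admissible_def cyl_def space_eq by auto
  then have "cyl_prob w \<le> measure \<nu> (space \<nu> - X)"
    unfolding cyl_prob_def using X by (intro finite_measure_mono) auto
  also have "\<dots> = 0"
    using prob_compl[OF X] assms(1) by (simp add: measure_def)
  finally show ?thesis using cyl_prob_nonneg[of w] by simp
qed

lemma block_entropy_le_ln_complexity:
  assumes "emeasure \<nu> X = 1"
  shows "block_entropy \<nu> n \<le> ln (real (complexity X n))"
proof -
  let ?L = "language X n"
  have L: "?L \<subseteq> {w. length w = n}" "finite ?L"
    using finite_language[of X n] by (auto simp: language_def)
  have zero: "cyl_prob w = 0" if "w \<in> {w. length w = n} - ?L" for w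
    using that cyl_prob_not_admissible[OF assms] by (simp add: language_eq_admissible)
  have "block_entropy \<nu> n = (\<Sum>w\<in>?L. - cyl_prob w * ln (cyl_prob w))"
    unfolding block_entropy_eq using L zero by (intro sum.mono_neutral_right finite_length_lists) auto
  moreover have "(\<Sum>w\<in>?L. cyl_prob w) = 1"
    using sum_cyl_prob[of n] sum.mono_neutral_right[OF finite_length_lists L(1), of cyl_prob] zero by simp
  then have "(\<Sum>w\<in>?L. - cyl_prob w * ln (cyl_prob w))
      \<le> 0 * (\<Sum>w\<in>?L. cyl_prob w * 0) + ln (\<Sum>w\<in>?L. exp (- 0 * 0))"
    by (intro gibbs_ineq[where b=0 and c="\<lambda>_. 0"] L(2) cyl_prob_nonneg)
  ultimately have "block_entropy \<nu> n \<le> ln (real (card ?L))"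
    by simp
  then show ?thesis
    by (simp add: complexity_def)
qed

lemma ks_entropy_eq_0:
  assumes "emeasure \<nu> X = 1"
  shows "ks_entropy \<nu> = 0"
proof -
  have "block_entropy \<nu> n \<le> ln Cc + real d * ln (real n + 1)" for n
  proof (cases "complexity X n = 0")
    case False
    have "ln (real (complexity X n)) \<le> ln (Cc * (real n + 1)^d)"
      using complexity_le_Cc[of n] Cc_ge_1 False by simp
    then have "block_entropy \<nu> n \<le> ln (Cc * (real n + 1)^d)"
      using block_entropy_le_ln_complexity[OF assms, of n] by linarith
    then show ?thesis
      using Cc_ge_1 by (simp add: ln_mult ln_realpow)
  next
    case True
    have "0 \<le> ln Cc + real d * ln (real n + 1)"
      using Cc_ge_1 by (intro add_nonneg_nonneg mult_nonneg_nonneg) simp_all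
    then show ?thesis
      using block_entropy_le_ln_complexity[OF assms, of n] True by simp
  qed
  then have upper: "\<forall>\<^sub>F n in sequentially. block_entropy \<nu> n / real n
      \<le> (ln Cc + real d * ln (real n + 1) + 0 * ln (real n + 1)^2) / real n"
    by (intro always_eventually allI divide_right_mono) auto
  have lower: "\<forall>\<^sub>F n in sequentially. 0 \<le> block_entropy \<nu> n / real n"
    by (simp add: block_entropy_nonneg)
  have "(\<lambda>n. block_entropy \<nu> n / real n) \<longlonglongrightarrow> 0"
    by (rule tendsto_sandwich[OF lower upper tendsto_const LIMSEQ_ln_square_div])
  then show ?thesis
    using ks_entropy_LIMSEQ LIMSEQ_unique by blast
qed

lemma AE_in_X_iff: "(AE x in \<nu>. x \<in> X) \<longleftrightarrow> emeasure \<nu> X = 1"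
  using AE_in_set_eq_1[of X] sets_X sets_eq emeasure_eq_measure[of X] by auto

lemma integral_phi_eq_0:
  assumes "emeasure \<nu> X = 1"
  shows "(\<integral>x. \<phi> x \<partial>\<nu>) = 0"
proof -
  have "AE x in \<nu>. x \<in> X"
    using assms AE_in_X_iff by simp
  then have "AE x in \<nu>. \<phi> x = 0"
    by (rule AE_mp) (simp add: phi_in_X)
  then show ?thesis
    by (rule integral_eq_zero_AE)
qed

lemma emeasure_X_eq_1:
  assumes "(\<integral>x. - \<phi> x \<partial>\<nu>) = 0"
  shows "emeasure \<nu> X = 1"
proof -
  have "AE x in \<nu>. - \<phi> x = 0"
    using integral_nonneg_eq_0_iff_AE[OF integrable_minus[OF integrable_phi]] assms phi_nonpos by simp
  then have "AE x in \<nu>. x \<in> X"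
    by (rule AE_mp) (use phi_neg in force)
  then show ?thesis
    using AE_in_X_iff by simp
qed

lemma free_energy_le: "ks_entropy \<nu> + (\<integral>x. b * \<phi> x \<partial>\<nu>) \<le> (\<beta>\<^sub>0 - b) * (\<integral>x. - \<phi> x \<partial>\<nu>)"
  using ks_entropy_le by (simp add: algebra_simps)

lemma free_energy_nonpos: "b > \<beta>\<^sub>0 \<Longrightarrow> ks_entropy \<nu> + (\<integral>x. b * \<phi> x \<partial>\<nu>) \<le> 0"
  using free_energy_le[of b] mult_nonpos_nonneg[OF _ integral_minus_phi_nonneg, of "\<beta>\<^sub>0 - b"] by simp

lemma free_energy_eq_0_iff:
  assumes "b > \<beta>\<^sub>0"
  shows "ks_entropy \<nu> + (\<integral>x. b * \<phi> x \<partial>\<nu>) = 0 \<longleftrightarrow> emeasure \<nu> X = 1"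
proof
  assume "ks_entropy \<nu> + (\<integral>x. b * \<phi> x \<partial>\<nu>) = 0"
  then have "(b - \<beta>\<^sub>0) * (\<integral>x. - \<phi> x \<partial>\<nu>) \<le> 0"
    using free_energy_le[of b] by (simp add: algebra_simps)
  then have "(\<integral>x. - \<phi> x \<partial>\<nu>) \<le> 0"
    using assms by (metis diff_gt_0_iff_gt mult_pos_pos not_le)
  then have "(\<integral>x. - \<phi> x \<partial>\<nu>) = 0"
    using integral_minus_phi_nonneg by linarith
  then show "emeasure \<nu> X = 1"
    by (rule emeasure_X_eq_1)
qed (simp add: ks_entropy_eq_0 integral_phi_eq_0)

end

lemma freezes_onI:
  fixes \<phi> :: "(nat \<Rightarrow> 'a::finite) \<Rightarrow> real" and \<beta> :: real
  assumes \<nu>\<^sub>0: "inv_measure_on X \<nu>\<^sub>0"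
    and nonpos: "\<And>b \<nu>. b > \<beta> \<Longrightarrow> inv_measure \<nu> \<Longrightarrow> ks_entropy \<nu> + (\<integral>x. b * \<phi> x \<partial>\<nu>) \<le> 0"
    and eq_0_iff: "\<And>b \<nu>. b > \<beta> \<Longrightarrow> inv_measure \<nu> \<Longrightarrow>
                    ks_entropy \<nu> + (\<integral>x. b * \<phi> x \<partial>\<nu>) = 0 \<longleftrightarrow> emeasure \<nu> X = 1"
    and entropy_0: "\<And>\<nu>. inv_measure_on X \<nu> \<Longrightarrow> ks_entropy \<nu> = 0"
  shows "freezes_on \<phi> X"
proof -
  have "{ks_entropy \<nu> | \<nu>. inv_measure_on X \<nu>} = {0}"
    using \<nu>\<^sub>0 entropy_0 by (auto intro!: exI[of _ "\<nu>\<^sub>0"])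
  then have top: "top_entropy X = 0"
    unfolding top_entropy_def by simp
  have pressure: "pressure (\<lambda>x. b * \<phi> x) = 0" if "b > \<beta>" for b
    unfolding pressure_def
  proof (rule cSup_eq_maximum)
    show "0 \<in> {ks_entropy \<nu> + (\<integral>x. b * \<phi> x \<partial>\<nu>) | \<nu>. inv_measure \<nu>}"
      using \<nu>\<^sub>0 eq_0_iff[OF that] unfolding inv_measure_on_def by (metis (mono_tags, lifting) mem_Collect_eq)
  qed (use nonpos[OF that] in blast)
  show ?thesis
    unfolding freezes_on_def
  proof (intro exI[of _ \<beta>] allI impI conjI)
    fix b assume "b > \<beta>"
    then show "pressure (\<lambda>x. b * \<phi> x) = top_entropy X"
      using pressure top by simp
    fix \<mu>
    show "equilibrium_state (\<lambda>x. b * \<phi> x) \<mu> \<longleftrightarrow> max_entropy_measure_on X \<mu>"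
      unfolding equilibrium_state_def max_entropy_measure_on_def pressure[OF \<open>b > \<beta>\<close>] top
      using eq_0_iff[OF \<open>b > \<beta>\<close>, of \<mu>] entropy_0[of \<mu>] by (auto simp: inv_measure_on_def)
  qed
qed

text \<open>Minimality is used only to exclude subshifts without invariant measures: such an \<open>X\<close>
  would lie inside every subshift, e.g. inside a single fixed point, which carries one.\<close>
lemma minimal_support_ex_inv_measure_on:
  fixes X :: "(nat \<Rightarrow> 'a::finite) set"
  assumes "subshift X" and "minimal_support X"
  shows "\<exists>\<nu>. inv_measure_on X \<nu>"
proof (rule ccontr)
  assume no: "\<nexists>\<nu>. inv_measure_on X \<nu>"
  define c :: 'a where "c = undefined"
  define z :: "nat \<Rightarrow> 'a" where "z = (\<lambda>_. c)"
  have shift_z: "shift z = z" unfolding shift_def z_def by simp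
  have "subshift {z}"
    unfolding subshift_def shift_closed_def
  proof (intro conjI allI impI)
    fix x assume h: "\<forall>n. \<exists>y\<in>{z}. \<forall>i<n. x i = y i"
    have "x i = z i" for i using h[rule_format, of "Suc i"] by auto
    then show "x \<in> {z}" by auto
  qed (use shift_z in auto)
  then have "X \<subseteq> {z}" using assms(2) no unfolding minimal_support_def by blast
  then have X: "X = {z}" using assms(1) unfolding subshift_def by blast
  have "{z} = (\<Inter>i. {x. x i = c})" unfolding z_def by auto
  then have z_sets: "{z} \<in> sets shift_space"
    by (auto intro: sets.countable_INT sets_coordinate)
  have "inv_measure_on X (return shift_space z)"
    unfolding inv_measure_on_def inv_measure_def
  proof (intro conjI ballI)
    show "prob_space (return shift_space z)"
      by (rule prob_space_return) (simp add: space_shift_space)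
    fix A :: "(nat \<Rightarrow> 'a) set" assume A: "A \<in> sets shift_space"
    have "shift -` A \<in> sets shift_space"
      using measurable_sets[OF shift_measurable A] by (simp add: space_shift_space)
    then show "emeasure (return shift_space z) (shift -` A) = emeasure (return shift_space z) A"
      using A shift_z by (simp add: indicator_def)
  qed (use X z_sets in simp_all)
  with no show False by blast
qed

theorem (in distance_potential) freezes_on_phi:
  fixes \<nu>\<^sub>0 :: "(nat \<Rightarrow> 'a) measure"
  assumes "inv_measure_on X \<nu>\<^sub>0"
  shows "freezes_on \<phi> X"
proof -
  have potential: "invariant_potential X a C d \<phi> \<nu>" if "inv_measure \<nu>" for \<nu> :: "(nat \<Rightarrow> 'a) measure"
    using that by (simp add: invariant_potential_def distance_potential_axioms shift_invariant_def)
  show ?thesis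
  proof (rule freezes_onI[OF assms, where \<beta>=\<beta>\<^sub>0])
    fix b and \<nu> :: "(nat \<Rightarrow> 'a) measure"
    assume "b > \<beta>\<^sub>0" "inv_measure \<nu>"
    then show "ks_entropy \<nu> + (\<integral>x. b * \<phi> x \<partial>\<nu>) \<le> 0"
      and "ks_entropy \<nu> + (\<integral>x. b * \<phi> x \<partial>\<nu>) = 0 \<longleftrightarrow> emeasure \<nu> X = 1"
      using invariant_potential.free_energy_nonpos invariant_potential.free_energy_eq_0_iff potential
      by blast+
  next
    fix \<nu> :: "(nat \<Rightarrow> 'a) measure"
    assume "inv_measure_on X \<nu>"
    then show "ks_entropy \<nu> = 0"
      using invariant_potential.ks_entropy_eq_0 potential unfolding inv_measure_on_def by blast
  qed
qed

theorem corollary5p5: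
  fixes X0 :: "(nat \<Rightarrow> 'a::finite) set"
    and a :: "nat \<Rightarrow> real"
    and \<phi> :: "(nat \<Rightarrow> 'a) \<Rightarrow> real"
  assumes "subshift X0"
    and "polynomial_complexity X0"
    and "minimal_support X0"
    and "\<And>j. a (Suc j) \<le> a j"
    and "\<And>j. j \<ge> 1 \<Longrightarrow> a j \<ge> (ln (real j))^2 / real j"
    and "\<And>x. x \<in> X0 \<Longrightarrow> \<phi> x = 0"
    and "\<And>x j. x \<notin> X0 \<Longrightarrow> shift_setdist x X0 = (1/2)^j \<Longrightarrow> \<phi> x = - a j"
  shows "freezes_on \<phi> X0"
proof -
  obtain C d where "\<And>n. n \<ge> 1 \<Longrightarrow> real (complexity X0 n) \<le> C * real n ^ d"
    using assms(2) unfolding polynomial_complexity_def by blast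
  then interpret distance_potential X0 a C d \<phi>
    using assms(1,4-7) by unfold_locales (auto simp: subshift_def)
  obtain \<nu>\<^sub>0 where "inv_measure_on X0 \<nu>\<^sub>0"
    using minimal_support_ex_inv_measure_on[OF assms(1,3)] by blast
  then show ?thesis
    by (rule freezes_on_phi)
qed

end
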